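(* Let $(M,(I,O))$ be a left-connected oriented map and $A=(H,\tau,\alpha)=\Lambda_1(M,(I,O))$. Then $A$ is a plane tree, and $(I,O)$ is the root-to-leaves orientation of $A$ (every non-root vertex of $A$ is incident to exactly one half-edge of $I$).
   Context: Permutations compose right to left. A map is $M=(H,\sigma,\alpha)$, $H$ finite, $\alpha$ a fixed-point-free involution, $\sigma$ a permutation, $\langle\sigma,\alpha\rangle$ transitive, root $r\in H$; vertices, edges, faces are cycles of $\sigma,\alpha,\phi=\sigma\alpha$; genus via $v-e+f=2-2g$; a plane tree is a map with one face and genus $0$. For a permutation $\pi$ and a subset $S$, $\pi_{|S}$ is obtained from the cycles of $\pi$ by erasing elements not in $S$. An orientation is a partition $H=I\uplus O$ with $\alpha(I)=O$. A left-path is a sequence $h_1,\dots,h_k\in I$ such that with $h_0=r$, for each $j$ there is $q_j>0$ with $h_{j-1}=\sigma^{q_j}(\alpha(h_j))$ and $\sigma^p(\alpha(h_j))\in O$ for $0\le p<q_j$; $(M,(I,O))$ is left-connected if every element of $I$ ends some left-path. Unfolding: take new elements $i,o\notin H$, $H'=H\cup\{i,o\}$, $I'=I\cup\{i\}$, $O'=O\cup\{o\}$, $\alpha'$ extending $\alpha$ with $\alpha'(i)=o$. $\sigma'$ is obtained from $\sigma$ by inserting $i$ just before $r$ in its cycle ($\sigma'(\sigma^{-1}(r))=i$, $\sigma'(i)=r$) and $\sigma'(o)=o$. $\pi_\circ=\sigma'_{|I'}$ regarded as a permutation of $H'$ fixing $O'$; $\tau'=\sigma'\pi_\circ^{-1}$;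 $\tau=\tau'_{|H}$. Then $\Lambda_1(M,(I,O))=(H,\tau,\alpha)$ with root $\tau'(i)$. *)

theory Defs
  imports "HOL-Combinatorics.Combinatorics"
begin

text \<open>Permutations are functions; composition right to left, so the product
  sigma alpha is sigma \<circ> alpha.\<close>

definition ncycles :: "('a \<Rightarrow> 'a) \<Rightarrow> 'a set \<Rightarrow> nat" where
  "ncycles p H = card {orbit p x | x. x \<in> H}"

definition is_map :: "'a set \<Rightarrow> ('a \<Rightarrow> 'a) \<Rightarrow> ('a \<Rightarrow> 'a) \<Rightarrow> bool" where
  "is_map H \<sigma> \<alpha> \<longleftrightarrow> finite H \<and> \<sigma> permutes H \<and> \<alpha> permutes H
     \<and> (\<forall>h\<in>H. \<alpha> h \<noteq> h \<and> \<alpha> (\<alpha> h) = h)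
     \<and> (\<forall>x\<in>H. \<forall>y\<in>H. (x, y) \<in> ({(h, \<sigma> h) | h. h \<in> H} \<union> {(h, \<alpha> h) | h. h \<in> H})\<^sup>*)"

definition rooted_map :: "'a set \<Rightarrow> ('a \<Rightarrow> 'a) \<Rightarrow> ('a \<Rightarrow> 'a) \<Rightarrow> 'a \<Rightarrow> bool" where
  "rooted_map H \<sigma> \<alpha> r \<longleftrightarrow> is_map H \<sigma> \<alpha> \<and> r \<in> H"

definition nvertices where "nvertices H \<sigma> \<alpha> = ncycles \<sigma> H"
definition nedges where "nedges H \<sigma> \<alpha> = ncycles \<alpha> H"
definition nfaces where "nfaces H \<sigma> \<alpha> = ncycles (\<sigma> \<circ> \<alpha>) H"

definition has_genus :: "'a set \<Rightarrow> ('a \<Rightarrow> 'a) \<Rightarrow> ('a \<Rightarrow> 'a) \<Rightarrow> nat \<Rightarrow> bool" where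
  "has_genus H \<sigma> \<alpha> g \<longleftrightarrow>
     int (nvertices H \<sigma> \<alpha>) - int (nedges H \<sigma> \<alpha>) + int (nfaces H \<sigma> \<alpha>) = 2 - 2 * int g"

definition plane_tree :: "'a set \<Rightarrow> ('a \<Rightarrow> 'a) \<Rightarrow> ('a \<Rightarrow> 'a) \<Rightarrow> 'a \<Rightarrow> bool" where
  "plane_tree H \<sigma> \<alpha> r \<longleftrightarrow> rooted_map H \<sigma> \<alpha> r \<and> nfaces H \<sigma> \<alpha> = 1 \<and> has_genus H \<sigma> \<alpha> 0"

text \<open>Restriction pi_{|S}: erase elements not in S from the cycles of pi;
  regarded as a permutation fixing everything outside S.\<close>
definition restr :: "('a \<Rightarrow> 'a) \<Rightarrow> 'a set \<Rightarrow> 'a \<Rightarrow> 'a" where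
  "restr p S x = (if x \<in> S then (p ^^ (LEAST k. 0 < k \<and> (p ^^ k) x \<in> S)) x else x)"

definition orientation :: "'a set \<Rightarrow> ('a \<Rightarrow> 'a) \<Rightarrow> 'a set \<Rightarrow> 'a set \<Rightarrow> bool" where
  "orientation H \<alpha> I Ou \<longleftrightarrow> I \<union> Ou = H \<and> I \<inter> Ou = {} \<and> \<alpha> ` I = Ou"

definition left_step :: "('a \<Rightarrow> 'a) \<Rightarrow> ('a \<Rightarrow> 'a) \<Rightarrow> 'a set \<Rightarrow> 'a \<Rightarrow> 'a \<Rightarrow> bool" where
  "left_step \<sigma> \<alpha> Ou x h \<longleftrightarrow>
     (\<exists>q>0. x = (\<sigma> ^^ q) (\<alpha> h) \<and> (\<forall>p<q. (\<sigma> ^^ p) (\<alpha> h) \<in> Ou))"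

text \<open>left-path h_1..h_k (k >= 1) with h_0 = r\<close>
definition left_path ::
  "('a \<Rightarrow> 'a) \<Rightarrow> ('a \<Rightarrow> 'a) \<Rightarrow> 'a \<Rightarrow> 'a set \<Rightarrow> 'a set \<Rightarrow> 'a list \<Rightarrow> bool" where
  "left_path \<sigma> \<alpha> r I Ou hs \<longleftrightarrow> hs \<noteq> [] \<and> set hs \<subseteq> I
     \<and> (\<forall>j<length hs. left_step \<sigma> \<alpha> Ou ((r # hs) ! j) (hs ! j))"

definition left_connected ::
  "('a \<Rightarrow> 'a) \<Rightarrow> ('a \<Rightarrow> 'a) \<Rightarrow> 'a \<Rightarrow> 'a set \<Rightarrow> 'a set \<Rightarrow> bool" where
  "left_connected \<sigma> \<alpha> r I Ou \<longleftrightarrow>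
     (\<forall>h\<in>I. \<exists>hs. left_path \<sigma> \<alpha> r I Ou hs \<and> last hs = h)"

text \<open>Unfolding with fresh elements ii (in I') and oo (in Ou').\<close>
definition sigma' :: "('a \<Rightarrow> 'a) \<Rightarrow> 'a \<Rightarrow> 'a \<Rightarrow> 'a \<Rightarrow> 'a \<Rightarrow> 'a" where
  "sigma' \<sigma> r ii oo x =
     (if x = ii then r else if x = oo then oo else if \<sigma> x = r then ii else \<sigma> x)"

definition pi_circ :: "('a \<Rightarrow> 'a) \<Rightarrow> 'a \<Rightarrow> 'a set \<Rightarrow> 'a \<Rightarrow> 'a \<Rightarrow> 'a \<Rightarrow> 'a" where
  "pi_circ \<sigma> r I ii oo = restr (sigma' \<sigma> r ii oo) (insert ii I)"

definition tau' :: "('a \<Rightarrow> 'a) \<Rightarrow> 'a \<Rightarrow> 'a set \<Rightarrow> 'a \<Rightarrow> 'a \<Rightarrow> 'a \<Rightarrow> 'a" where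
  "tau' \<sigma> r I ii oo = sigma' \<sigma> r ii oo \<circ> inv (pi_circ \<sigma> r I ii oo)"

definition lambda1_tau :: "'a set \<Rightarrow> ('a \<Rightarrow> 'a) \<Rightarrow> 'a \<Rightarrow> 'a set \<Rightarrow> 'a \<Rightarrow> 'a \<Rightarrow> 'a \<Rightarrow> 'a" where
  "lambda1_tau H \<sigma> r I ii oo = restr (tau' \<sigma> r I ii oo) H"

definition lambda1_root :: "('a \<Rightarrow> 'a) \<Rightarrow> 'a \<Rightarrow> 'a set \<Rightarrow> 'a \<Rightarrow> 'a \<Rightarrow> 'a" where
  "lambda1_root \<sigma> r I ii oo = tau' \<sigma> r I ii oo ii"

end

theory Submission
  imports Defs
begin

text \<open>Label each half-edge x of the unfolded map by the first element of I' = I \<union> {ii} met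
  when turning around the vertex of x with \<sigma>'. Since \<pi> is a first-return map, \<tau>' preserves
  these labels and visits every half-edge carrying a given label, so the vertices of the unfolding
  are exactly the label classes: a root vertex labelled ii, and for every h \<in> I one vertex whose
  only element of I is h. This gives |I| + 1 vertices and |I| edges. Left-connectivity makes the
  parent map, sending h \<in> I to the label of \<alpha> h, lead back to ii, so vertices and edges form a
  tree; deleting a leaf edge and inducting shows that \<tau> \<circ> \<alpha> is a single cycle, and Euler's
  formula then gives genus 0.\<close>

section \<open>Reachability under iteration\<close>

definition reaches :: "('a \<Rightarrow> 'a) \<Rightarrow> 'a \<Rightarrow> 'a \<Rightarrow> bool" where
  "reaches f x y \<longleftrightarrow> (\<exists>n. (f ^^ n) x = y)"

lemma reaches_refl [simp]: "reaches f x x"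
  unfolding reaches_def by (rule exI[of _ 0]) simp

lemma reaches_step [simp]: "reaches f x (f x)"
  unfolding reaches_def by (rule exI[of _ 1]) simp

lemma reaches_stepI: "f x = y \<Longrightarrow> reaches f x y"
  unfolding reaches_def by (rule exI[of _ 1]) simp

lemma reaches_trans [trans]:
  assumes "reaches f x y" "reaches f y z" shows "reaches f x z"
proof -
  obtain m n where "(f ^^ m) x = y" "(f ^^ n) y = z" using assms unfolding reaches_def by blast
  then have "(f ^^ (n + m)) x = z" by (simp add: funpow_add)
  then show ?thesis unfolding reaches_def by blast
qed

lemma reaches_funpow [simp]: "reaches f x ((f ^^ n) x)"
  unfolding reaches_def by blast

lemma funpow_fixed: "f x = x \<Longrightarrow> (f ^^ n) x = x"
  by (induction n) auto

lemma reaches_fixed: "f x = x \<Longrightarrow> reaches f x y \<Longrightarrow> y = x"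
  unfolding reaches_def by (auto simp: funpow_fixed)

lemma reaches_simulate:
  assumes closed: "\<And>z. z \<in> A \<Longrightarrow> g z \<in> A" and step: "\<And>z. z \<in> A \<Longrightarrow> reaches f z (g z)"
    and "x \<in> A" and "reaches g x y"
  shows "reaches f x y"
proof -
  have "(g ^^ n) x \<in> A \<and> reaches f x ((g ^^ n) x)" for n
  proof (induction n)
    case (Suc n) then show ?case using closed step reaches_trans by fastforce
  qed (simp add: \<open>x \<in> A\<close>)
  then show ?thesis using \<open>reaches g x y\<close> unfolding reaches_def by blast
qed

lemma orbit_permutation_iff_reaches:
  "permutation f \<Longrightarrow> y \<in> orbit f x \<longleftrightarrow> reaches f x y"
  unfolding reaches_def by (auto simp: orbit_altdef_permutation)

lemma reaches_sym: "permutation f \<Longrightarrow> reaches f x y \<Longrightarrow> reaches f y x"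
  using orbit_swap permutation_self_in_orbit orbit_permutation_iff_reaches by metis

lemma orbit_involution: "\<alpha> (\<alpha> x) = x \<Longrightarrow> orbit \<alpha> x = {x, \<alpha> x}"
proof
  assume inv: "\<alpha> (\<alpha> x) = x"
  show "orbit \<alpha> x \<subseteq> {x, \<alpha> x}"
  proof
    fix y assume "y \<in> orbit \<alpha> x" then show "y \<in> {x, \<alpha> x}" by induction (auto simp: inv)
  qed
  show "{x, \<alpha> x} \<subseteq> orbit \<alpha> x" using orbit.base[of \<alpha> x] orbit.step[of "\<alpha> x" \<alpha> x] inv by auto
qed

lemma ncycles_eq_card_image:
  assumes "\<And>x. x \<in> H \<Longrightarrow> orbit f x = {y \<in> H. g y = g x}"
  shows "ncycles f H = card (g ` H)"
proof -
  have cycles: "{orbit f x | x. x \<in> H} = (\<lambda>v. {y \<in> H. g y = v}) ` (g ` H)"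
    using assms by auto
  have "inj_on (\<lambda>v. {y \<in> H. g y = v}) (g ` H)"
    by (intro inj_onI) blast
  then show ?thesis unfolding ncycles_def cycles by (rule card_image)
qed

lemma reaches_rtrancl:
  assumes "\<And>z. z \<in> H \<Longrightarrow> f z \<in> H" "\<And>z. z \<in> H \<Longrightarrow> g z \<in> H" "x \<in> H" "reaches (f \<circ> g) x y"
  shows "(x, y) \<in> ({(z, f z) | z. z \<in> H} \<union> {(z, g z) | z. z \<in> H})\<^sup>*"
proof -
  let ?E = "{(z, f z) | z. z \<in> H} \<union> {(z, g z) | z. z \<in> H}"
  have "((f \<circ> g) ^^ n) x \<in> H \<and> (x, ((f \<circ> g) ^^ n) x) \<in> ?E\<^sup>*" for n
  proof (induction n)
    case (Suc n)
    then obtain z where z: "z = ((f \<circ> g) ^^ n) x" "z \<in> H" "(x, z) \<in> ?E\<^sup>*" by blast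
    then have "(z, g z) \<in> ?E" "(g z, f (g z)) \<in> ?E" using assms(2) by blast+
    then have "(x, f (g z)) \<in> ?E\<^sup>*" using z(3) by (meson rtrancl_into_rtrancl)
    moreover have "f (g z) \<in> H" using z(2) assms(1,2) by blast
    moreover have "((f \<circ> g) ^^ Suc n) x = f (g z)" using z(1) by simp
    ultimately show ?case by (simp only:)
  qed (simp add: assms(3))
  then show ?thesis using assms(4) unfolding reaches_def by blast
qed

section \<open>First returns and first hits\<close>

lemma restr_outside: "x \<notin> S \<Longrightarrow> restr p S x = x"
  unfolding restr_def by simp

lemma restr_first_return:
  assumes "permutation p" "x \<in> S"
  obtains k where "0 < k" "(p ^^ k) x \<in> S" "\<And>i. 0 < i \<Longrightarrow> i < k \<Longrightarrow> (p ^^ i) x \<notin> S"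
    "restr p S x = (p ^^ k) x"
proof -
  obtain n where "0 < n" "(p ^^ n) x = x" using permutation_self[OF assms(1)] by blast
  then have ex: "\<exists>k. 0 < k \<and> (p ^^ k) x \<in> S" using assms(2) by metis
  define k where "k = (LEAST k. 0 < k \<and> (p ^^ k) x \<in> S)"
  have "0 < k \<and> (p ^^ k) x \<in> S" unfolding k_def using LeastI_ex[OF ex] .
  moreover have "\<And>i. 0 < i \<Longrightarrow> i < k \<Longrightarrow> (p ^^ i) x \<notin> S"
    unfolding k_def using not_less_Least by blast
  moreover have "restr p S x = (p ^^ k) x" unfolding restr_def k_def using assms(2) by simp
  ultimately show thesis by (intro that) auto
qed

lemma restr_in: "permutation p \<Longrightarrow> x \<in> S \<Longrightarrow> restr p S x \<in> S"
  by (rule restr_first_return[of p x S]) auto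

lemma restr_permutes:
  assumes p: "permutation p" and "finite S"
  shows "restr p S permutes S"
proof -
  have "inj_on (restr p S) S"
  proof -
    have "x = y" if x: "x \<in> S" and y: "y \<in> S" and eq: "restr p S x = restr p S y"
      and le: "k \<le> l" and kx: "0 < k" "restr p S x = (p ^^ k) x"
      and ly: "\<And>i. 0 < i \<Longrightarrow> i < l \<Longrightarrow> (p ^^ i) y \<notin> S" "restr p S y = (p ^^ l) y"
    for x y k l
    proof -
      have "(p ^^ k) x = (p ^^ k) ((p ^^ (l - k)) y)"
        using eq kx ly le by (metis comp_apply funpow_add le_add_diff_inverse)
      then have "x = (p ^^ (l - k)) y"
        using inj_fn[OF permutation_bijective[OF p, THEN bij_is_inj]] by (meson injD)
      then show "x = y" using ly(1)[of "l - k"] x kx(1) by (cases "l - k = 0") auto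
    qed
    then show ?thesis
      by (intro inj_onI) (metis restr_first_return[OF p] nat_le_linear)
  qed
  then have "bij_betw (restr p S) S S"
    using endo_inj_surj[OF \<open>finite S\<close>] restr_in[OF p] by (auto simp: bij_betw_def)
  then show ?thesis by (rule bij_imp_permutes) (simp add: restr_outside)
qed

lemma funpow_in_orbit_restr:
  assumes p: "permutation p" and "finite S"
  shows "z \<in> S \<Longrightarrow> (p ^^ n) z \<in> S \<Longrightarrow> (p ^^ n) z \<in> orbit (restr p S) z"
proof (induction n arbitrary: z rule: less_induct)
  case (less n)
  obtain k where k: "0 < k" "(p ^^ k) z \<in> S" "\<And>i. 0 < i \<Longrightarrow> i < k \<Longrightarrow> (p ^^ i) z \<notin> S"
    "restr p S z = (p ^^ k) z" using restr_first_return[OF p less.prems(1)] by blast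
  show ?case
  proof (cases "n < k")
    case True
    then have "n = 0" using k(3) less.prems(2) by blast
    moreover have "permutation (restr p S)"
      using restr_permutes[OF assms] \<open>finite S\<close> permutation_permutes by blast
    ultimately show ?thesis using permutation_self_in_orbit by simp
  next
    case False
    then have shift: "(p ^^ n) z = (p ^^ (n - k)) (restr p S z)"
      using k(4) by (metis comp_apply funpow_add le_add_diff_inverse2 not_less)
    show ?thesis
    proof (cases "n = k")
      case True then show ?thesis using shift orbit.base by simp
    next
      case False
      then have "n - k < n" "(p ^^ (n - k)) (restr p S z) \<in> S"
        using k(1) \<open>\<not> n < k\<close> shift less.prems(2) by auto
      then have "(p ^^ (n - k)) (restr p S z) \<in> orbit (restr p S) (restr p S z)"
        using less.IH restr_in[OF p less.prems(1)] by blast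
      then show ?thesis using shift orbit_subset by metis
    qed
  qed
qed

lemma orbit_restr:
  assumes p: "permutation p" and "finite S" "x \<in> S"
  shows "orbit (restr p S) x = orbit p x \<inter> S"
proof
  show "orbit (restr p S) x \<subseteq> orbit p x \<inter> S"
  proof
    fix y assume "y \<in> orbit (restr p S) x"
    then show "y \<in> orbit p x \<inter> S"
    proof induction
      case base then show ?case
        using restr_first_return[OF p \<open>x \<in> S\<close>]
        by (metis IntI funpow_in_orbit permutation_self_in_orbit[OF p])
    next
      case (step y) then show ?case
        using restr_first_return[OF p, of y S] by (metis IntD1 IntD2 IntI funpow_in_orbit)
    qed
  qed
  show "orbit p x \<inter> S \<subseteq> orbit (restr p S) x"
    using funpow_in_orbit_restr[OF assms(1,2) \<open>x \<in> S\<close>] by (auto simp: orbit_altdef_permutation[OF p])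
qed

definition first_hit :: "('a \<Rightarrow> 'a) \<Rightarrow> 'a set \<Rightarrow> 'a \<Rightarrow> 'a" where
  "first_hit p S x = (p ^^ (LEAST k. (p ^^ k) x \<in> S)) x"

lemma first_hit_eqI:
  assumes "(p ^^ j) x \<in> S" "\<And>i. i < j \<Longrightarrow> (p ^^ i) x \<notin> S"
  shows "first_hit p S x = (p ^^ j) x"
proof -
  have "(LEAST k. (p ^^ k) x \<in> S) = j"
    using assms by (intro Least_equality) (auto simp: not_less[symmetric])
  then show ?thesis unfolding first_hit_def by simp
qed

lemma first_hitE:
  assumes "(p ^^ n) x \<in> S"
  obtains j where "(p ^^ j) x \<in> S" "\<And>i. i < j \<Longrightarrow> (p ^^ i) x \<notin> S"
    "first_hit p S x = (p ^^ j) x"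
proof -
  define j where "j = (LEAST j. (p ^^ j) x \<in> S)"
  have hit: "(p ^^ j) x \<in> S" unfolding j_def using assms by (rule LeastI)
  have before: "\<And>i. i < j \<Longrightarrow> (p ^^ i) x \<notin> S" unfolding j_def by (rule not_less_Least)
  show thesis by (rule that[OF hit before first_hit_eqI[OF hit before]])
qed

lemma first_hit_in: "(p ^^ n) x \<in> S \<Longrightarrow> first_hit p S x \<in> S"
  by (rule first_hitE) auto

lemma first_hit_self: "x \<in> S \<Longrightarrow> first_hit p S x = x"
  using first_hit_eqI[where j = 0] by simp

lemma first_hit_step:
  assumes "x \<notin> S" "(p ^^ n) x \<in> S"
  shows "first_hit p S (p x) = first_hit p S x"
proof -
  obtain j where j: "(p ^^ j) x \<in> S" "\<And>i. i < j \<Longrightarrow> (p ^^ i) x \<notin> S"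
    "first_hit p S x = (p ^^ j) x" using first_hitE[OF assms(2)] by blast
  obtain i where i: "j = Suc i" using j(1) assms(1) by (cases j) auto
  have "first_hit p S (p x) = (p ^^ i) (p x)"
  proof (rule first_hit_eqI)
    show "(p ^^ i) (p x) \<in> S" using j(1) i by (simp add: funpow_swap1)
    show "(p ^^ i') (p x) \<notin> S" if "i' < i" for i'
      using j(2)[of "Suc i'"] that i by (simp add: funpow_swap1)
  qed
  then show ?thesis using j(3) i by (simp add: funpow_swap1)
qed

lemma first_hit_restr:
  assumes "permutation p" "y \<in> S"
  shows "first_hit p S (p y) = restr p S y"
proof -
  obtain k where k: "0 < k" "(p ^^ k) y \<in> S" "\<And>i. 0 < i \<Longrightarrow> i < k \<Longrightarrow> (p ^^ i) y \<notin> S"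
    "restr p S y = (p ^^ k) y" using restr_first_return[OF assms] by blast
  then obtain i where i: "k = Suc i" by (cases k) auto
  have "first_hit p S (p y) = (p ^^ i) (p y)"
  proof (rule first_hit_eqI)
    show "(p ^^ i) (p y) \<in> S" using k(2) i by (simp add: funpow_swap1)
    show "(p ^^ i') (p y) \<notin> S" if "i' < i" for i'
      using k(3)[of "Suc i'"] that i by (simp add: funpow_swap1)
  qed
  then show ?thesis using k(4) i by (simp add: funpow_swap1)
qed

section \<open>Trees have a single face\<close>

definition bypass :: "('a \<Rightarrow> 'a) \<Rightarrow> 'a \<Rightarrow> 'a \<Rightarrow> 'a" where
  "bypass f a z = (if f z = a then f a else f z)"

lemma reaches_bypass:
  assumes closed: "\<And>z. z \<in> H \<Longrightarrow> f z \<in> H" and inj: "inj_on f H" and "a \<in> H"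
  shows "x \<in> H \<Longrightarrow> x \<noteq> a \<Longrightarrow> y \<noteq> a \<Longrightarrow> (f ^^ n) x = y \<Longrightarrow> reaches (bypass f a) x y"
proof (induction n arbitrary: x rule: less_induct)
  case (less n)
  show ?case
  proof (cases n)
    case 0 then show ?thesis using less.prems by simp
  next
    case (Suc k)
    have k: "(f ^^ k) (f x) = y" using less.prems(4) Suc by (simp add: funpow_swap1)
    show ?thesis
    proof (cases "f x = a")
      case False
      then have "reaches (bypass f a) (f x) y"
        using less.IH[of k "f x"] Suc less.prems closed k by simp
      moreover have "bypass f a x = f x" using False by (simp add: bypass_def)
      ultimately show ?thesis by (metis reaches_step reaches_trans)
    next
      case True
      then obtain k' where k': "k = Suc k'" using k less.prems(3) by (cases k) auto
      have "(f ^^ k') (f a) = y" using k True k' by (simp add: funpow_swap1)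
      moreover have "f a \<noteq> a" using True inj \<open>a \<in> H\<close> less.prems(1,2) by (metis inj_on_def)
      ultimately have "reaches (bypass f a) (f a) y"
        using less.IH[of k' "f a"] Suc k' less.prems(3) closed \<open>a \<in> H\<close> by simp
      moreover have "bypass f a x = f a" using True by (simp add: bypass_def)
      ultimately show ?thesis by (metis reaches_step reaches_trans)
    qed
  qed
qed

text \<open>The vertices of a map (H, \<tau>, \<alpha>) are named by vtx: a vertex other than the root is named by
  its unique half-edge in I, the root by c. The parent of h \<in> I is vtx (\<alpha> h), and every parent
  chain ends at the root.\<close>

locale labelled_tree =
  fixes H :: "'a set" and \<tau> \<alpha> :: "'a \<Rightarrow> 'a" and I :: "'a set" and vtx :: "'a \<Rightarrow> 'a" and c :: 'a
  assumes finite_H: "finite H"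
    and \<tau>_bij: "bij_betw \<tau> H H"
    and \<alpha>_in: "x \<in> H \<Longrightarrow> \<alpha> x \<in> H"
    and \<alpha>_\<alpha>: "x \<in> H \<Longrightarrow> \<alpha> (\<alpha> x) = x"
    and I_subset: "I \<subseteq> H"
    and in_I_iff: "x \<in> H \<Longrightarrow> x \<in> I \<longleftrightarrow> \<alpha> x \<notin> I"
    and vtx_I: "h \<in> I \<Longrightarrow> vtx h = h"
    and vtx_\<tau>: "x \<in> H \<Longrightarrow> vtx (\<tau> x) = vtx x"
    and vtx_range: "x \<in> H \<Longrightarrow> vtx x \<in> insert c I"
    and c_notin_I: "c \<notin> I"
    and vtx_reaches: "x \<in> H \<Longrightarrow> y \<in> H \<Longrightarrow> vtx x = vtx y \<Longrightarrow> reaches \<tau> x y"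
    and reaches_root: "h \<in> I \<Longrightarrow> reaches (vtx \<circ> \<alpha>) h c"
begin

lemma \<tau>_in: "x \<in> H \<Longrightarrow> \<tau> x \<in> H"
  using \<tau>_bij by (rule bij_betw_apply)

lemma \<tau>_inj: "x \<in> H \<Longrightarrow> y \<in> H \<Longrightarrow> \<tau> x = \<tau> y \<Longrightarrow> x = y"
  using \<tau>_bij by (auto simp: bij_betw_def inj_on_def)

lemma fixed_point_fibre: "x \<in> H \<Longrightarrow> \<tau> x = x \<Longrightarrow> y \<in> H \<Longrightarrow> vtx y = vtx x \<Longrightarrow> y = x"
  using vtx_reaches reaches_fixed by metis

definition depth :: "'a \<Rightarrow> nat" where
  "depth h = (LEAST n. ((vtx \<circ> \<alpha>) ^^ n) h = c)"

lemma depth_parent: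
  assumes "h \<in> I" shows "depth h = Suc (depth (vtx (\<alpha> h)))"
proof -
  obtain n where "((vtx \<circ> \<alpha>) ^^ n) h = c" using reaches_root[OF assms] unfolding reaches_def by blast
  moreover have "h \<noteq> c" using assms c_notin_I by blast
  ultimately have "depth h = Suc (LEAST m. ((vtx \<circ> \<alpha>) ^^ Suc m) h = c)"
    unfolding depth_def by (intro Least_Suc) auto
  then show ?thesis unfolding depth_def by (simp add: funpow_swap1)
qed

text \<open>A half-edge of maximal depth is a leaf: anything else at its vertex would have a child.\<close>

lemma leaf_exists:
  assumes "H \<noteq> {}"
  obtains h where "h \<in> I" "\<tau> h = h"
proof -
  have "finite I" using finite_subset[OF I_subset finite_H] .
  moreover have "I \<noteq> {}" using assms in_I_iff \<alpha>_in by blast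
  ultimately obtain h where h: "h \<in> I" "\<And>g. g \<in> I \<Longrightarrow> depth g \<le> depth h"
    using Max_in[of "depth ` I"] Max_ge[of "depth ` I"] by fastforce
  have "\<tau> h = h"
  proof (rule ccontr)
    assume moved: "\<tau> h \<noteq> h"
    have hH: "h \<in> H" using h(1) I_subset by blast
    have "vtx (\<tau> h) = h" using vtx_\<tau>[OF hH] vtx_I[OF h(1)] by simp
    then have "\<tau> h \<notin> I" using vtx_I moved by force
    then have g: "\<alpha> (\<tau> h) \<in> I" using in_I_iff \<tau>_in[OF hH] by blast
    have "vtx (\<alpha> (\<alpha> (\<tau> h))) = h" using \<alpha>_\<alpha>[OF \<tau>_in[OF hH]] \<open>vtx (\<tau> h) = h\<close> by simp
    then have "depth (\<alpha> (\<tau> h)) = Suc (depth h)" using depth_parent[OF g] by simp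
    then show False using h(2)[OF g] by simp
  qed
  then show thesis using that h(1) by blast
qed

context
  fixes h assumes leaf: "h \<in> I" "\<tau> h = h"
begin

lemma leaf_in: "h \<in> H"
  using leaf(1) I_subset by blast

lemma leaf_mate_in: "\<alpha> h \<in> H" and leaf_mate_notin_I: "\<alpha> h \<notin> I"
  using \<alpha>_in in_I_iff leaf(1) leaf_in by auto

lemma leaf_mate_ne: "\<alpha> h \<noteq> h"
  using leaf(1) leaf_mate_notin_I by auto

lemma leaf_fibre: "x \<in> H \<Longrightarrow> vtx x = h \<Longrightarrow> x = h"
  using fixed_point_fibre[OF leaf_in leaf(2)] vtx_I[OF leaf(1)] by simp

lemma bypass_leaf_edge_in:
  assumes "x \<in> H - {h, \<alpha> h}" shows "bypass \<tau> (\<alpha> h) x \<in> H - {h, \<alpha> h}"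
proof -
  have "\<tau> x \<noteq> h" using assms leaf(2) \<tau>_inj[of x h] leaf_in by auto
  moreover have "\<tau> (\<alpha> h) \<noteq> h" using leaf(2) \<tau>_inj[of "\<alpha> h" h] leaf_in leaf_mate_in leaf_mate_notin_I leaf_mate_ne by auto
  moreover have "\<tau> x = \<alpha> h \<Longrightarrow> \<tau> (\<alpha> h) \<noteq> \<alpha> h"
    using assms \<tau>_inj[of x "\<alpha> h"] leaf_mate_in by auto
  ultimately show ?thesis using assms \<tau>_in leaf_mate_in by (auto simp: bypass_def)
qed

lemma delete_leaf: "labelled_tree (H - {h, \<alpha> h}) (bypass \<tau> (\<alpha> h)) \<alpha> (I - {h}) vtx c"
proof
  let ?H0 = "H - {h, \<alpha> h}" and ?\<tau>0 = "bypass \<tau> (\<alpha> h)"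
  show fin: "finite ?H0" using finite_H by simp
  have inj: "inj_on ?\<tau>0 ?H0"
  proof (rule inj_onI)
    fix x y assume "x \<in> ?H0" "y \<in> ?H0" "?\<tau>0 x = ?\<tau>0 y"
    then show "x = y"
      using \<tau>_inj[of x y] \<tau>_inj[of "\<alpha> h" x] \<tau>_inj[of "\<alpha> h" y] leaf_mate_in
      by (auto simp: bypass_def split: if_splits)
  qed
  have into: "?\<tau>0 ` ?H0 \<subseteq> ?H0" by (rule image_subsetI) (rule bypass_leaf_edge_in)
  show "bij_betw ?\<tau>0 ?H0 ?H0"
    unfolding bij_betw_def using inj endo_inj_surj[OF fin into inj] by blast
  show "\<alpha> x \<in> ?H0" if "x \<in> ?H0" for x
    using that \<alpha>_in[of x] \<alpha>_\<alpha>[of x] \<alpha>_\<alpha>[OF leaf_in] by auto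
  show "\<alpha> (\<alpha> x) = x" if "x \<in> ?H0" for x using that \<alpha>_\<alpha> by blast
  show "I - {h} \<subseteq> ?H0" using I_subset leaf_mate_notin_I by blast
  show "x \<in> I - {h} \<longleftrightarrow> \<alpha> x \<notin> I - {h}" if "x \<in> ?H0" for x
    using that in_I_iff[of x] \<alpha>_\<alpha>[of x] by auto
  show "vtx g = g" if "g \<in> I - {h}" for g using that vtx_I by blast
  show "vtx (?\<tau>0 x) = vtx x" if "x \<in> ?H0" for x
    using that vtx_\<tau>[of x] vtx_\<tau>[OF leaf_mate_in] by (auto simp: bypass_def)
  show "vtx x \<in> insert c (I - {h})" if "x \<in> ?H0" for x
    using that vtx_range[of x] leaf_fibre[of x] by blast
  show "c \<notin> I - {h}" using c_notin_I by blast
  show "reaches ?\<tau>0 x y" if xy: "x \<in> ?H0" "y \<in> ?H0" "vtx x = vtx y" for x y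
  proof -
    obtain n where n: "(\<tau> ^^ n) x = y" using vtx_reaches[of x y] xy unfolding reaches_def by blast
    have "inj_on \<tau> H" using \<tau>_bij by (simp add: bij_betw_def)
    from reaches_bypass[OF \<tau>_in this leaf_mate_in] show ?thesis using xy n by blast
  qed
  show "reaches (vtx \<circ> \<alpha>) g c" if "g \<in> I - {h}" for g using that reaches_root by blast
qed

lemma face_step_bypass:
  assumes "z \<in> H - {h, \<alpha> h}" shows "reaches (\<tau> \<circ> \<alpha>) z (bypass \<tau> (\<alpha> h) (\<alpha> z))"
proof (cases "\<tau> (\<alpha> z) = \<alpha> h")
  case True
  then have "((\<tau> \<circ> \<alpha>) ^^ 3) z = \<tau> (\<alpha> h)"
    using leaf(2) \<alpha>_\<alpha>[OF leaf_in] by (simp add: numeral_3_eq_3)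
  then show ?thesis using True unfolding bypass_def reaches_def by metis
next
  case False then show ?thesis using reaches_step[of "\<tau> \<circ> \<alpha>" z] by (simp add: bypass_def)
qed

lemma face_reaches_bypass:
  assumes "x \<in> H - {h, \<alpha> h}" "reaches (bypass \<tau> (\<alpha> h) \<circ> \<alpha>) x y"
  shows "reaches (\<tau> \<circ> \<alpha>) x y"
proof (rule reaches_simulate[OF _ _ assms])
  interpret deleted: labelled_tree "H - {h, \<alpha> h}" "bypass \<tau> (\<alpha> h)" \<alpha> "I - {h}" vtx c
    by (rule delete_leaf)
  show "(bypass \<tau> (\<alpha> h) \<circ> \<alpha>) z \<in> H - {h, \<alpha> h}" if "z \<in> H - {h, \<alpha> h}" for z
    using that deleted.\<alpha>_in deleted.\<tau>_in by simp
  show "reaches (\<tau> \<circ> \<alpha>) z ((bypass \<tau> (\<alpha> h) \<circ> \<alpha>) z)" if "z \<in> H - {h, \<alpha> h}" for z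
    using face_step_bypass[OF that] by simp
qed

text \<open>If \<alpha> h formed a vertex on its own, that vertex would be the root, and a remaining
  half-edge of I of minimal depth would have no parent left.\<close>

lemma leaf_edge_not_fixed:
  assumes "H - {h, \<alpha> h} \<noteq> {}" shows "\<tau> (\<alpha> h) \<noteq> \<alpha> h"
proof
  assume fixed: "\<tau> (\<alpha> h) = \<alpha> h"
  have "vtx (\<alpha> h) = c"
  proof (rule ccontr)
    assume "vtx (\<alpha> h) \<noteq> c"
    then have "vtx (\<alpha> h) \<in> I" using vtx_range[OF leaf_mate_in] by blast
    then have "vtx (\<alpha> h) = \<alpha> h"
      using fixed_point_fibre[OF leaf_mate_in fixed] vtx_I I_subset by blast
    then show False using \<open>vtx (\<alpha> h) \<in> I\<close> leaf_mate_notin_I by simp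
  qed
  then have labels: "vtx u \<in> I - {h}" if "u \<in> H - {h, \<alpha> h}" for u
    using that vtx_range[of u] leaf_fibre[of u] fixed_point_fibre[OF leaf_mate_in fixed, of u]
    by auto
  have "finite (I - {h})" using finite_subset[OF I_subset finite_H] by simp
  moreover have "I - {h} \<noteq> {}" using assms labels by blast
  ultimately obtain g where g: "g \<in> I - {h}" "\<And>g'. g' \<in> I - {h} \<Longrightarrow> depth g \<le> depth g'"
    using Min_in[of "depth ` (I - {h})"] Min_le[of "depth ` (I - {h})"] by fastforce
  have gH: "g \<in> H" using g(1) I_subset by blast
  have "\<alpha> g \<in> H - {h, \<alpha> h}"
    using g(1) \<alpha>_in[OF gH] in_I_iff[OF gH] leaf(1) \<alpha>_\<alpha>[OF gH] \<alpha>_\<alpha>[OF leaf_in] by auto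
  then have "depth g \<le> depth (vtx (\<alpha> g))" using g(2) labels by blast
  then show False using depth_parent[of g] g(1) by simp
qed

lemma single_edge_face_reaches:
  assumes "H - {h, \<alpha> h} = {}" "x \<in> H" "y \<in> H" shows "reaches (\<tau> \<circ> \<alpha>) x y"
proof -
  have H: "H = {h, \<alpha> h}" using assms(1) leaf_in leaf_mate_in leaf_mate_notin_I leaf_mate_ne by blast
  have "\<tau> (\<alpha> h) \<noteq> h" using leaf(2) \<tau>_inj[of "\<alpha> h" h] leaf_in leaf_mate_in leaf_mate_notin_I leaf_mate_ne by auto
  then have "\<tau> (\<alpha> h) = \<alpha> h" using \<tau>_in[OF leaf_mate_in] H by blast
  then have "(\<tau> \<circ> \<alpha>) h = \<alpha> h" "(\<tau> \<circ> \<alpha>) (\<alpha> h) = h"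
    using leaf(2) \<alpha>_\<alpha>[OF leaf_in] by simp_all
  then show ?thesis using assms(2,3) H reaches_step[of "\<tau> \<circ> \<alpha>"] by (metis insertE singletonD reaches_refl)
qed

lemma face_reaches_remainder:
  assumes "H - {h, \<alpha> h} \<noteq> {}" "x \<in> H"
  obtains u where "u \<in> H - {h, \<alpha> h}" "reaches (\<tau> \<circ> \<alpha>) x u"
proof -
  have moved: "\<tau> (\<alpha> h) \<notin> {h, \<alpha> h}"
    using leaf_edge_not_fixed[OF assms(1)] leaf(2) \<tau>_inj[of "\<alpha> h" h] leaf_in leaf_mate_in leaf_mate_notin_I leaf_mate_ne by auto
  have "(\<tau> \<circ> \<alpha>) h = \<tau> (\<alpha> h)" "(\<tau> \<circ> \<alpha>) (\<alpha> h) = h"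
    using leaf(2) \<alpha>_\<alpha>[OF leaf_in] by simp_all
  then have "reaches (\<tau> \<circ> \<alpha>) h (\<tau> (\<alpha> h))" "reaches (\<tau> \<circ> \<alpha>) (\<alpha> h) (\<tau> (\<alpha> h))"
    using reaches_step[of "\<tau> \<circ> \<alpha>"] reaches_trans by metis+
  moreover have "\<tau> (\<alpha> h) \<in> H - {h, \<alpha> h}" using moved \<tau>_in[OF leaf_mate_in] by blast
  ultimately show thesis using that assms(2) reaches_refl by (metis Diff_iff insertE singletonD)
qed

lemma face_reaches_from_remainder:
  assumes "H - {h, \<alpha> h} \<noteq> {}"
    and core: "\<And>u v. u \<in> H - {h, \<alpha> h} \<Longrightarrow> v \<in> H - {h, \<alpha> h} \<Longrightarrow> reaches (\<tau> \<circ> \<alpha>) u v"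
    and u: "u \<in> H - {h, \<alpha> h}" and y: "y \<in> H"
  shows "reaches (\<tau> \<circ> \<alpha>) u y"
proof -
  have "\<alpha> h \<in> \<tau> ` H" using \<tau>_bij leaf_mate_in by (simp add: bij_betw_def)
  then obtain w where w: "w \<in> H" "\<tau> w = \<alpha> h" by auto
  have "w \<noteq> h" using w(2) leaf(2) leaf_mate_ne by auto
  moreover have "w \<noteq> \<alpha> h" using w(2) leaf_edge_not_fixed[OF assms(1)] by auto
  ultimately have "\<alpha> w \<in> H - {h, \<alpha> h}"
    using \<alpha>_in[OF w(1)] \<alpha>_\<alpha>[OF w(1)] \<alpha>_\<alpha>[OF leaf_in] by auto
  then have "reaches (\<tau> \<circ> \<alpha>) u (\<alpha> w)" using core u by blast
  also have "reaches (\<tau> \<circ> \<alpha>) (\<alpha> w) (\<alpha> h)"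
    using reaches_step[of "\<tau> \<circ> \<alpha>" "\<alpha> w"] w(2) \<alpha>_\<alpha>[OF w(1)] by simp
  finally have to_a: "reaches (\<tau> \<circ> \<alpha>) u (\<alpha> h)" .
  also have "reaches (\<tau> \<circ> \<alpha>) (\<alpha> h) h"
    using reaches_step[of "\<tau> \<circ> \<alpha>" "\<alpha> h"] leaf(2) \<alpha>_\<alpha>[OF leaf_in] by simp
  finally have to_h: "reaches (\<tau> \<circ> \<alpha>) u h" .
  show ?thesis
  proof (cases "y \<in> {h, \<alpha> h}")
    case True then show ?thesis using to_a to_h by blast
  next
    case False then show ?thesis using core u y by blast
  qed
qed

end

end

theorem labelled_tree_single_face:
  assumes "labelled_tree H \<tau> \<alpha> I vtx c" "x \<in> H" "y \<in> H"
  shows "reaches (\<tau> \<circ> \<alpha>) x y"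
  using assms
proof (induction "card H" arbitrary: H \<tau> I x y rule: less_induct)
  case less
  interpret labelled_tree H \<tau> \<alpha> I vtx c by (rule less.prems(1))
  obtain h where h: "h \<in> I" "\<tau> h = h" using leaf_exists less.prems(2) by blast
  show ?case
  proof (cases "H - {h, \<alpha> h} = {}")
    case True then show ?thesis using single_edge_face_reaches[OF h] less.prems(2,3) by blast
  next
    case False
    have smaller: "card (H - {h, \<alpha> h}) < card H"
      using finite_H leaf_in[OF h] by (intro psubset_card_mono) auto
    have core: "reaches (\<tau> \<circ> \<alpha>) u v" if "u \<in> H - {h, \<alpha> h}" "v \<in> H - {h, \<alpha> h}" for u v
      using less.hyps[OF smaller delete_leaf[OF h] that] by (rule face_reaches_bypass[OF h that(1)])
    obtain u where u: "u \<in> H - {h, \<alpha> h}" "reaches (\<tau> \<circ> \<alpha>) x u"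
      using face_reaches_remainder[OF h False less.prems(2)] .
    show ?thesis
      using u(2) face_reaches_from_remainder[OF h False core u(1) less.prems(3)] by (rule reaches_trans)
  qed
qed

section \<open>The unfolding\<close>

locale left_connected_map =
  fixes H I Ou :: "'a set" and \<sigma> \<alpha> :: "'a \<Rightarrow> 'a" and r ii oo :: 'a
  assumes rooted: "rooted_map H \<sigma> \<alpha> r"
    and oriented: "orientation H \<alpha> I Ou"
    and left_conn: "left_connected \<sigma> \<alpha> r I Ou"
    and ii_notin: "ii \<notin> H" and oo_notin: "oo \<notin> H" and ii_ne_oo: "ii \<noteq> oo"
begin

abbreviation "\<sigma>' \<equiv> sigma' \<sigma> r ii oo"
abbreviation "\<pi> \<equiv> pi_circ \<sigma> r I ii oo"
abbreviation "\<tau>' \<equiv> tau' \<sigma> r I ii oo"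
abbreviation "\<tau> \<equiv> lambda1_tau H \<sigma> r I ii oo"
abbreviation "\<rho> \<equiv> lambda1_root \<sigma> r I ii oo"
abbreviation "I' \<equiv> insert ii I"
abbreviation "H' \<equiv> insert ii (insert oo H)"
abbreviation "vtx \<equiv> first_hit \<sigma>' I'"

lemma finite_H: "finite H" and \<sigma>_permutes: "\<sigma> permutes H" and \<alpha>_permutes: "\<alpha> permutes H"
  and \<alpha>_\<alpha>: "x \<in> H \<Longrightarrow> \<alpha> (\<alpha> x) = x" and \<alpha>_fpf: "x \<in> H \<Longrightarrow> \<alpha> x \<noteq> x" and r_in: "r \<in> H"
  using rooted unfolding rooted_map_def is_map_def by auto

lemma I_subset: "I \<subseteq> H" and Ou_subset: "Ou \<subseteq> H" and I_Ou_disjoint: "I \<inter> Ou = {}"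
  and \<alpha>_I: "\<alpha> ` I = Ou"
  using oriented unfolding orientation_def by auto

lemma \<alpha>_in: "x \<in> H \<Longrightarrow> \<alpha> x \<in> H"
  using \<alpha>_permutes by (simp add: permutes_in_image)

lemma in_Ou_iff: "x \<in> H \<Longrightarrow> x \<in> Ou \<longleftrightarrow> x \<notin> I"
  using oriented unfolding orientation_def by blast

lemma in_I_iff: "x \<in> H \<Longrightarrow> x \<in> I \<longleftrightarrow> \<alpha> x \<notin> I"
proof -
  assume x: "x \<in> H"
  have "x \<in> Ou \<longleftrightarrow> \<alpha> x \<in> I"
  proof
    assume "x \<in> Ou"
    then obtain h where "h \<in> I" "x = \<alpha> h" using \<alpha>_I by blast
    then show "\<alpha> x \<in> I" using \<alpha>_\<alpha> I_subset by auto
  next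
    assume "\<alpha> x \<in> I"
    then show "x \<in> Ou" using \<alpha>_I \<alpha>_\<alpha>[OF x] by (metis imageI)
  qed
  then show ?thesis using in_Ou_iff[OF x] by blast
qed

lemma Ou_notin_I': "x \<in> Ou \<Longrightarrow> x \<notin> I'"
  using I_Ou_disjoint Ou_subset ii_notin by blast

lemma \<sigma>'_eq: "\<sigma>' = \<sigma> \<circ> transpose (inv \<sigma> r) ii"
proof
  fix x
  have w: "inv \<sigma> r \<in> H" "\<sigma> (inv \<sigma> r) = r"
    using \<sigma>_permutes r_in by (simp_all add: permutes_in_image permutes_inv permutes_inverses)
  have fixes_new: "\<sigma> ii = ii" "\<sigma> oo = oo"
    using \<sigma>_permutes ii_notin oo_notin by (simp_all add: permutes_not_in)
  have pred: "\<sigma> x = r \<longleftrightarrow> x = inv \<sigma> r"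
    using permutes_inverses[OF \<sigma>_permutes] w(2) by auto
  consider "x = ii" | "x = oo" | "x = inv \<sigma> r" | "x \<notin> {ii, oo, inv \<sigma> r}" by blast
  then show "\<sigma>' x = (\<sigma> \<circ> transpose (inv \<sigma> r) ii) x"
  proof cases
    case 1 then show ?thesis using w by (simp add: sigma'_def)
  next
    case 2
    moreover have "oo \<noteq> inv \<sigma> r" using w(1) oo_notin by blast
    ultimately show ?thesis using fixes_new ii_ne_oo by (simp add: sigma'_def transpose_apply_other)
  next
    case 3 then show ?thesis using w fixes_new ii_notin oo_notin by (auto simp: sigma'_def)
  next
    case 4 then show ?thesis using pred by (auto simp: sigma'_def transpose_apply_other)
  qed
qed

lemma \<sigma>'_permutes: "\<sigma>' permutes H'"
proof -
  have "\<sigma> permutes H'" using \<sigma>_permutes by (rule permutes_subset) blast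
  moreover have "transpose (inv \<sigma> r) ii permutes H'"
    using \<sigma>_permutes r_in by (intro permutes_swap_id) (auto simp: permutes_in_image permutes_inv)
  ultimately show ?thesis unfolding \<sigma>'_eq by (rule permutes_compose[rotated])
qed

lemma \<sigma>'_permutation: "permutation \<sigma>'"
  by (rule permutes_imp_permutation[OF _ \<sigma>'_permutes]) (simp add: finite_H)

lemma \<sigma>'_ii_pred: "\<sigma>' (inv \<sigma> r) = ii"
  using \<sigma>_permutes ii_notin by (simp add: \<sigma>'_eq permutes_not_in)

lemma \<sigma>'_eq_\<sigma>: "x \<in> H \<Longrightarrow> \<sigma> x \<noteq> r \<Longrightarrow> \<sigma>' x = \<sigma> x"
  using ii_notin oo_notin by (auto simp: sigma'_def)

lemma \<pi>_permutes: "\<pi> permutes I'"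
  unfolding pi_circ_def using restr_permutes[OF \<sigma>'_permutation] finite_subset[OF I_subset finite_H]
  by blast

lemma \<tau>'_permutes: "\<tau>' permutes H'"
proof -
  have "inv \<pi> permutes H'"
    by (rule permutes_subset[OF permutes_inv[OF \<pi>_permutes]]) (use I_subset in blast)
  then show ?thesis unfolding tau'_def using \<sigma>'_permutes by (rule permutes_compose)
qed

lemma \<tau>'_permutation: "permutation \<tau>'"
  by (rule permutes_imp_permutation[OF _ \<tau>'_permutes]) (simp add: finite_H)

lemma \<tau>_permutes: "\<tau> permutes H"
  unfolding lambda1_tau_def using restr_permutes[OF \<tau>'_permutation finite_H] .

lemma \<tau>_permutation: "permutation \<tau>"
  by (rule permutes_imp_permutation[OF finite_H \<tau>_permutes])

lemma \<tau>'_outside_I': "x \<notin> I' \<Longrightarrow> \<tau>' x = \<sigma>' x"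
  using permutes_not_in[OF permutes_inv[OF \<pi>_permutes]] by (simp add: tau'_def)

lemma \<sigma>'_oo: "\<sigma>' oo = oo"
  using ii_ne_oo by (simp add: sigma'_def)

lemma \<sigma>'_pred_r: "z \<in> H \<Longrightarrow> \<sigma> z = r \<Longrightarrow> \<sigma>' z = ii"
  using ii_notin oo_notin by (auto simp: sigma'_def)

lemma \<sigma>'_funpow_eq_\<sigma>:
  assumes "y \<in> H" "\<And>i. i < n \<Longrightarrow> \<sigma> ((\<sigma> ^^ i) y) \<noteq> r"
  shows "(\<sigma>' ^^ n) y = (\<sigma> ^^ n) y"
  using assms(2)
proof (induction n)
  case (Suc n)
  have "(\<sigma> ^^ n) y \<in> H" using permutes_funpow[OF \<sigma>_permutes] assms(1) by (rule permutes_in_image[THEN iffD2])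
  then show ?case using Suc \<sigma>'_eq_\<sigma>[of "(\<sigma> ^^ n) y"] by simp
qed simp

lemma vtx_after_Ou_run:
  assumes "(\<sigma>' ^^ n) y \<in> I'" "\<And>i. i < n \<Longrightarrow> (\<sigma>' ^^ i) y \<in> Ou"
  shows "vtx y = (\<sigma>' ^^ n) y"
  using assms(1) by (rule first_hit_eqI) (use assms(2) Ou_notin_I' in blast)

text \<open>Along a left step \<sigma>' agrees with \<sigma> until the corner before r, where it enters ii.\<close>

lemma left_step_first_hit:
  assumes step: "left_step \<sigma> \<alpha> Ou x h" and h: "h \<in> I" and x: "x \<in> insert r I"
  shows "(\<exists>n. (\<sigma>' ^^ n) (\<alpha> h) \<in> I') \<and> (vtx (\<alpha> h) = ii \<or> vtx (\<alpha> h) = x \<and> x \<noteq> r)"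
proof -
  obtain q where q: "0 < q" "x = (\<sigma> ^^ q) (\<alpha> h)" "\<And>p. p < q \<Longrightarrow> (\<sigma> ^^ p) (\<alpha> h) \<in> Ou"
    using step unfolding left_step_def by blast
  have ah: "\<alpha> h \<in> H" using h I_subset \<alpha>_in by blast
  show ?thesis
  proof (cases "\<exists>p<q. \<sigma> ((\<sigma> ^^ p) (\<alpha> h)) = r")
    case True
    define p where "p = (LEAST p. \<sigma> ((\<sigma> ^^ p) (\<alpha> h)) = r)"
    have p: "\<sigma> ((\<sigma> ^^ p) (\<alpha> h)) = r" "p < q"
      using True LeastI_ex[of "\<lambda>p. \<sigma> ((\<sigma> ^^ p) (\<alpha> h)) = r"] Least_le[of "\<lambda>p. \<sigma> ((\<sigma> ^^ p) (\<alpha> h)) = r"]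
      unfolding p_def by (blast, fastforce)
    have agree: "(\<sigma>' ^^ i) (\<alpha> h) = (\<sigma> ^^ i) (\<alpha> h)" if "i \<le> p" for i
      using \<sigma>'_funpow_eq_\<sigma>[OF ah] not_less_Least[of _ "\<lambda>p. \<sigma> ((\<sigma> ^^ p) (\<alpha> h)) = r"] that
      unfolding p_def by fastforce
    have "(\<sigma> ^^ p) (\<alpha> h) \<in> H" using q(3) p(2) Ou_subset by blast
    then have "(\<sigma>' ^^ Suc p) (\<alpha> h) = ii" using agree[of p] \<sigma>'_pred_r p(1) by simp
    moreover have "vtx (\<alpha> h) = (\<sigma>' ^^ Suc p) (\<alpha> h)"
      using calculation agree q(3) p(2) by (intro vtx_after_Ou_run) simp_all
    ultimately show ?thesis by (intro conjI exI[of _ "Suc p"]) auto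
  next
    case False
    then have reach_x: "(\<sigma>' ^^ q) (\<alpha> h) = x" using \<sigma>'_funpow_eq_\<sigma>[OF ah] q(2) by blast
    have "x \<noteq> r"
      using False q(1,2) by (cases q) auto
    have hit: "(\<sigma>' ^^ q) (\<alpha> h) \<in> I'" using reach_x x \<open>x \<noteq> r\<close> by simp
    have "vtx (\<alpha> h) = (\<sigma>' ^^ q) (\<alpha> h)"
      using hit \<sigma>'_funpow_eq_\<sigma>[OF ah] False q(3) by (intro vtx_after_Ou_run) simp_all
    then show ?thesis using hit reach_x \<open>x \<noteq> r\<close> by (intro conjI exI[of _ q]) auto
  qed
qed

lemma left_path_nth:
  assumes "left_path \<sigma> \<alpha> r I Ou hs" "k < length hs"
  shows "hs ! k \<in> I" "(r # hs) ! k \<in> insert r I" "left_step \<sigma> \<alpha> Ou ((r # hs) ! k) (hs ! k)"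
proof -
  show "hs ! k \<in> I" "left_step \<sigma> \<alpha> Ou ((r # hs) ! k) (hs ! k)"
    using assms nth_mem unfolding left_path_def by blast+
  show "(r # hs) ! k \<in> insert r I"
  proof (cases k)
    case (Suc j)
    then have "hs ! j \<in> set hs" using assms(2) by simp
    then show ?thesis using Suc assms(1) unfolding left_path_def by auto
  qed simp
qed

lemma left_path_to:
  assumes "h \<in> I"
  obtains hs k where "left_path \<sigma> \<alpha> r I Ou hs" "k < length hs" "hs ! k = h"
proof -
  obtain hs where "left_path \<sigma> \<alpha> r I Ou hs" "last hs = h"
    using left_conn assms unfolding left_connected_def by blast
  moreover then have "hs \<noteq> []" unfolding left_path_def by blast
  ultimately show thesis using that[of hs "length hs - 1"] by (simp add: last_conv_nth)
qed

lemma left_path_parent_chain: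
  assumes "left_path \<sigma> \<alpha> r I Ou hs" shows "k < length hs \<Longrightarrow> reaches (vtx \<circ> \<alpha>) (hs ! k) ii"
proof (induction k)
  case 0
  have "(vtx \<circ> \<alpha>) (hs ! 0) = ii"
    using left_step_first_hit[OF left_path_nth(3,1)[OF assms 0]] by simp
  then show ?case by (rule reaches_stepI)
next
  case (Suc k)
  have "k < length hs" using Suc.prems by simp
  then have IH: "reaches (vtx \<circ> \<alpha>) (hs ! k) ii" by (rule Suc.IH)
  consider (root) "vtx (\<alpha> (hs ! Suc k)) = ii" | (prev) "vtx (\<alpha> (hs ! Suc k)) = hs ! k"
    using conjunct2[OF left_step_first_hit[OF left_path_nth(3,1,2)[OF assms Suc.prems]]] by auto
  then show ?case
  proof cases
    case root then show ?thesis by (intro reaches_stepI) simp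
  next
    case prev
    then have "reaches (vtx \<circ> \<alpha>) (hs ! Suc k) (hs ! k)" by (intro reaches_stepI) simp
    then show ?thesis using IH by (rule reaches_trans)
  qed
qed

lemma parent_reaches_ii:
  assumes "h \<in> I" shows "reaches (vtx \<circ> \<alpha>) h ii"
proof -
  obtain hs k where hs: "left_path \<sigma> \<alpha> r I Ou hs" "k < length hs" "hs ! k = h"
    using left_path_to[OF assms] .
  show ?thesis using left_path_parent_chain[OF hs(1,2)] hs(3) by simp
qed

lemma \<sigma>'_hits_I':
  assumes "x \<in> insert ii H" shows "\<exists>n. (\<sigma>' ^^ n) x \<in> I'"
proof (cases "x \<in> I'")
  case True then show ?thesis by (metis funpow_0)
next
  case False
  then have "\<alpha> x \<in> I" "x \<in> H" using assms in_I_iff by auto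
  then obtain hs k where hs: "left_path \<sigma> \<alpha> r I Ou hs" "k < length hs" "hs ! k = \<alpha> x"
    using left_path_to by blast
  show ?thesis
    using left_step_first_hit[OF left_path_nth(3,1,2)[OF hs(1,2)]] hs(3) \<alpha>_\<alpha>[OF \<open>x \<in> H\<close>] by simp
qed

lemma vtx_in_I':
  assumes "x \<in> insert ii H" shows "vtx x \<in> I'"
proof -
  obtain n where "(\<sigma>' ^^ n) x \<in> I'" using \<sigma>'_hits_I'[OF assms] by blast
  then show ?thesis by (rule first_hit_in)
qed

lemma inv_\<sigma>_r_in_Ou: "inv \<sigma> r \<in> Ou"
proof -
  have "I \<noteq> {}" using in_I_iff[OF r_in] by blast
  then obtain g where "g \<in> I" by blast
  then obtain hs k where hs: "left_path \<sigma> \<alpha> r I Ou hs" "k < length hs"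
    by (rule left_path_to)
  then have "0 < length hs" by linarith
  then have "left_step \<sigma> \<alpha> Ou r (hs ! 0)" using left_path_nth(3)[OF hs(1), of 0] by simp
  then obtain q where q: "0 < q" "r = (\<sigma> ^^ q) (\<alpha> (hs ! 0))" "\<And>p. p < q \<Longrightarrow> (\<sigma> ^^ p) (\<alpha> (hs ! 0)) \<in> Ou"
    unfolding left_step_def by blast
  then have "r = \<sigma> ((\<sigma> ^^ (q - 1)) (\<alpha> (hs ! 0)))" by (cases q) auto
  then have "inv \<sigma> r = (\<sigma> ^^ (q - 1)) (\<alpha> (hs ! 0))" by (simp add: permutes_inverses(2)[OF \<sigma>_permutes])
  then show ?thesis using q(1,3) by simp
qed

lemma \<tau>'_oo: "\<tau>' oo = oo"
  using \<tau>'_outside_I'[of oo] \<sigma>'_oo ii_ne_oo oo_notin I_subset by auto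

lemma \<tau>'_closed: "x \<in> insert ii H \<Longrightarrow> \<tau>' x \<in> insert ii H"
proof -
  assume x: "x \<in> insert ii H"
  then have "\<tau>' x \<in> H'" using permutes_in_image[OF \<tau>'_permutes, of x] by auto
  moreover have "\<tau>' x \<noteq> oo"
    using \<tau>'_oo permutes_inj[OF \<tau>'_permutes] x ii_ne_oo oo_notin by (metis injD insertE)
  ultimately show ?thesis by blast
qed

lemma vtx_\<tau>':
  assumes x: "x \<in> insert ii H" shows "vtx (\<tau>' x) = vtx x"
proof (cases "x \<in> I'")
  case True
  have "inv \<pi> x \<in> I'" using permutes_in_image[OF permutes_inv[OF \<pi>_permutes], of x] True by auto
  moreover have "\<pi> (inv \<pi> x) = x" using permutes_inverses(1)[OF \<pi>_permutes] .
  ultimately have "vtx (\<sigma>' (inv \<pi> x)) = x"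
    using first_hit_restr[OF \<sigma>'_permutation] unfolding pi_circ_def by metis
  then show ?thesis using first_hit_self[OF True] by (simp add: tau'_def)
next
  case False
  obtain n where "(\<sigma>' ^^ n) x \<in> I'" using \<sigma>'_hits_I'[OF x] by blast
  then show ?thesis using first_hit_step[OF False] \<tau>'_outside_I'[OF False] by simp
qed

lemma \<tau>'_reaches_vtx:
  assumes x: "x \<in> insert ii H" shows "reaches \<tau>' x (vtx x)"
proof -
  obtain n where "(\<sigma>' ^^ n) x \<in> I'" using \<sigma>'_hits_I'[OF x] by blast
  then obtain j where j: "\<And>i. i < j \<Longrightarrow> (\<sigma>' ^^ i) x \<notin> I'" "vtx x = (\<sigma>' ^^ j) x"
    by (rule first_hitE) blast
  have "i \<le> j \<Longrightarrow> (\<tau>' ^^ i) x = (\<sigma>' ^^ i) x" for i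
  proof (induction i)
    case (Suc i)
    then show ?case using \<tau>'_outside_I'[OF j(1)[of i]] by simp
  qed simp
  then show ?thesis using j(2) reaches_funpow[of \<tau>' x j] by simp
qed

lemma orbit_\<tau>':
  assumes x: "x \<in> insert ii H" shows "orbit \<tau>' x = {y \<in> insert ii H. vtx y = vtx x}"
proof
  show "orbit \<tau>' x \<subseteq> {y \<in> insert ii H. vtx y = vtx x}"
  proof
    fix y assume "y \<in> orbit \<tau>' x"
    then show "y \<in> {y \<in> insert ii H. vtx y = vtx x}"
    proof induction
      case base then show ?case using \<tau>'_closed[OF x] vtx_\<tau>'[OF x] by simp
    next
      case (step y) then show ?case using \<tau>'_closed[of y] vtx_\<tau>'[of y] by simp
    qed
  qed
  show "{y \<in> insert ii H. vtx y = vtx x} \<subseteq> orbit \<tau>' x"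
  proof
    fix y assume y: "y \<in> {y \<in> insert ii H. vtx y = vtx x}"
    have "reaches \<tau>' x (vtx x)" by (rule \<tau>'_reaches_vtx[OF x])
    moreover have "reaches \<tau>' (vtx x) y"
      using y \<tau>'_reaches_vtx[of y] reaches_sym[OF \<tau>'_permutation] by simp
    ultimately have "reaches \<tau>' x y" by (rule reaches_trans)
    then show "y \<in> orbit \<tau>' x" using orbit_permutation_iff_reaches[OF \<tau>'_permutation] by simp
  qed
qed

lemma orbit_\<tau>:
  assumes "x \<in> H" shows "orbit \<tau> x = {y \<in> H. vtx y = vtx x}"
proof -
  have "orbit \<tau> x = orbit \<tau>' x \<inter> H"
    unfolding lambda1_tau_def using orbit_restr[OF \<tau>'_permutation finite_H assms] .
  then show ?thesis using orbit_\<tau>'[of x] assms by auto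
qed

lemma lambda1_root_in: "\<rho> \<in> H" and vtx_root: "vtx \<rho> = ii"
proof -
  have "\<rho> = \<tau>' ii" unfolding lambda1_root_def ..
  then show "vtx \<rho> = ii" using vtx_\<tau>'[of ii] first_hit_self[of ii I'] by simp
  have "\<tau>' ii \<noteq> ii"
  proof
    assume "\<tau>' ii = ii"
    then have "\<sigma>' (inv \<pi> ii) = \<sigma>' (inv \<sigma> r)" using \<sigma>'_ii_pred by (simp add: tau'_def)
    then have "inv \<pi> ii = inv \<sigma> r" by (rule injD[OF permutes_inj[OF \<sigma>'_permutes]])
    moreover have "inv \<pi> ii \<in> I'" using permutes_in_image[OF permutes_inv[OF \<pi>_permutes], of ii] by auto
    ultimately show False using inv_\<sigma>_r_in_Ou Ou_notin_I' by simp
  qed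
  then show "\<rho> \<in> H" using \<tau>'_closed[of ii] \<open>\<rho> = \<tau>' ii\<close> by simp
qed

lemma lambda1_labelled_tree: "labelled_tree H \<tau> \<alpha> I vtx ii"
proof
  show "finite H" by (rule finite_H)
  show "bij_betw \<tau> H H" using \<tau>_permutes by (rule permutes_imp_bij)
  show "\<alpha> x \<in> H" "\<alpha> (\<alpha> x) = x" if "x \<in> H" for x using that \<alpha>_in \<alpha>_\<alpha> by blast+
  show "I \<subseteq> H" by (rule I_subset)
  show "x \<in> I \<longleftrightarrow> \<alpha> x \<notin> I" if "x \<in> H" for x using that by (rule in_I_iff)
  show "vtx h = h" if "h \<in> I" for h using that by (simp add: first_hit_self)
  show "vtx (\<tau> x) = vtx x" if "x \<in> H" for x using orbit_\<tau>[OF that] orbit.base[of \<tau> x] by blast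
  show "vtx x \<in> I'" if "x \<in> H" for x using that vtx_in_I' by blast
  show "ii \<notin> I" using ii_notin I_subset by blast
  show "reaches \<tau> x y" if "x \<in> H" "y \<in> H" "vtx x = vtx y" for x y
    using orbit_\<tau>[OF that(1)] that(2,3) orbit_permutation_iff_reaches[OF \<tau>_permutation] by auto
  show "reaches (vtx \<circ> \<alpha>) h ii" if "h \<in> I" for h using that by (rule parent_reaches_ii)
qed

lemma face_permutes: "\<tau> \<circ> \<alpha> permutes H"
  using \<alpha>_permutes \<tau>_permutes by (rule permutes_compose)

lemma orbit_face:
  assumes "x \<in> H" shows "orbit (\<tau> \<circ> \<alpha>) x = H"
proof
  show "orbit (\<tau> \<circ> \<alpha>) x \<subseteq> H" using face_permutes assms by (rule permutes_orbit_subset)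
  show "H \<subseteq> orbit (\<tau> \<circ> \<alpha>) x"
  proof
    fix y assume "y \<in> H"
    have "permutation (\<tau> \<circ> \<alpha>)" by (rule permutes_imp_permutation[OF finite_H face_permutes])
    moreover have "reaches (\<tau> \<circ> \<alpha>) x y" by (rule labelled_tree_single_face[OF lambda1_labelled_tree assms \<open>y \<in> H\<close>])
    ultimately show "y \<in> orbit (\<tau> \<circ> \<alpha>) x" by (simp add: orbit_permutation_iff_reaches)
  qed
qed

lemma vtx_image: "vtx ` H = I'"
proof
  show "vtx ` H \<subseteq> I'" using vtx_in_I' by blast
  show "I' \<subseteq> vtx ` H"
  proof
    fix v assume v: "v \<in> I'"
    show "v \<in> vtx ` H"
    proof (cases "v = ii")
      case True then show ?thesis using image_eqI[of ii vtx \<rho> H] vtx_root lambda1_root_in by simp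
    next
      case False
      then have "v \<in> H" using v I_subset by blast
      then show ?thesis using image_eqI[of v vtx v H] first_hit_self[OF v, where p = \<sigma>'] by simp
    qed
  qed
qed

lemma lambda1_nvertices: "nvertices H \<tau> \<alpha> = Suc (card I)"
proof -
  have "ncycles \<tau> H = card I'" using ncycles_eq_card_image[OF orbit_\<tau>] vtx_image by simp
  moreover have "ii \<notin> I" using ii_notin I_subset by blast
  ultimately show ?thesis using finite_subset[OF I_subset finite_H] unfolding nvertices_def by simp
qed

lemma lambda1_nedges: "nedges H \<tau> \<alpha> = card I"
proof -
  define e where "e x = (if x \<in> I then x else \<alpha> x)" for x
  have same_e: "e y = e x \<longleftrightarrow> y = x \<or> y = \<alpha> x" if x: "x \<in> H" and y: "y \<in> H" for x y
  proof -
    have ax: "\<alpha> x \<in> I \<longleftrightarrow> x \<notin> I" and ay: "\<alpha> y \<in> I \<longleftrightarrow> y \<notin> I"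
      using in_I_iff[OF x] in_I_iff[OF y] by blast+
    have "\<alpha> y = x \<longleftrightarrow> y = \<alpha> x" using \<alpha>_\<alpha>[OF x] \<alpha>_\<alpha>[OF y] by auto
    moreover have "\<alpha> y = \<alpha> x \<longleftrightarrow> y = x" using \<alpha>_\<alpha>[OF x] \<alpha>_\<alpha>[OF y] by metis
    ultimately show ?thesis unfolding e_def using ax ay by (cases "x \<in> I"; cases "y \<in> I") auto
  qed
  have orbits: "orbit \<alpha> x = {y \<in> H. e y = e x}" if "x \<in> H" for x
    using orbit_involution[of \<alpha> x, OF \<alpha>_\<alpha>[OF that]] same_e[OF that] that \<alpha>_in[OF that] by auto
  have "e ` H = I"
  proof
    show "e ` H \<subseteq> I" using in_I_iff unfolding e_def by auto
    show "I \<subseteq> e ` H"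
    proof
      fix h assume "h \<in> I"
      then show "h \<in> e ` H" using image_eqI[of h e h H] I_subset unfolding e_def by auto
    qed
  qed
  then show ?thesis unfolding nedges_def using ncycles_eq_card_image[of H \<alpha> e, OF orbits] by simp
qed

lemma lambda1_nfaces: "nfaces H \<tau> \<alpha> = 1"
proof -
  have "{orbit (\<tau> \<circ> \<alpha>) x | x. x \<in> H} = {H}" using orbit_face r_in by blast
  then show ?thesis unfolding nfaces_def ncycles_def by simp
qed

lemma lambda1_is_map: "is_map H \<tau> \<alpha>"
  unfolding is_map_def
proof (intro conjI ballI)
  show "finite H" "\<tau> permutes H" "\<alpha> permutes H" by (fact finite_H \<tau>_permutes \<alpha>_permutes)+
  show "\<alpha> h \<noteq> h" "\<alpha> (\<alpha> h) = h" if "h \<in> H" for h using that \<alpha>_fpf \<alpha>_\<alpha> by blast+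
  show "(x, y) \<in> ({(h, \<tau> h) | h. h \<in> H} \<union> {(h, \<alpha> h) | h. h \<in> H})\<^sup>*" if "x \<in> H" "y \<in> H" for x y
  proof (rule reaches_rtrancl)
    show "\<tau> z \<in> H" "\<alpha> z \<in> H" if "z \<in> H" for z
      using that permutes_in_image[OF \<tau>_permutes] \<alpha>_in by blast+
    show "reaches (\<tau> \<circ> \<alpha>) x y" using labelled_tree_single_face[OF lambda1_labelled_tree that] .
  qed (rule that(1))
qed

theorem lambda1_plane_tree: "plane_tree H \<tau> \<alpha> \<rho>"
  unfolding plane_tree_def rooted_map_def has_genus_def
  using lambda1_is_map lambda1_root_in lambda1_nfaces lambda1_nvertices lambda1_nedges by simp

theorem lambda1_root_to_leaves:
  assumes "x \<in> H" "x \<notin> orbit \<tau> \<rho>" shows "card (orbit \<tau> x \<inter> I) = 1"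
proof -
  have "vtx x \<noteq> ii" using assms orbit_\<tau>[OF lambda1_root_in] vtx_root by auto
  then have "vtx x \<in> I" using vtx_in_I'[of x] assms(1) by simp
  then have "orbit \<tau> x \<inter> I = {vtx x}"
    using orbit_\<tau>[OF assms(1)] first_hit_self[of _ I' \<sigma>'] I_subset by auto
  then show ?thesis by simp
qed

end

theorem mainTheorem11:
  fixes H I Ou :: "'a set" and \<sigma> \<alpha> :: "'a \<Rightarrow> 'a" and r ii oo :: 'a
  assumes "rooted_map H \<sigma> \<alpha> r"
    and "orientation H \<alpha> I Ou"
    and "left_connected \<sigma> \<alpha> r I Ou"
    and "ii \<notin> H" and "oo \<notin> H" and "ii \<noteq> oo"
  shows "plane_tree H (lambda1_tau H \<sigma> r I ii oo) \<alpha> (lambda1_root \<sigma> r I ii oo)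
    \<and> (\<forall>x\<in>H. x \<notin> orbit (lambda1_tau H \<sigma> r I ii oo) (lambda1_root \<sigma> r I ii oo)
          \<longrightarrow> card (orbit (lambda1_tau H \<sigma> r I ii oo) x \<inter> I) = 1)"
proof -
  interpret left_connected_map H I Ou \<sigma> \<alpha> r ii oo using assms by unfold_locales
  show ?thesis using lambda1_plane_tree lambda1_root_to_leaves by blast
qed

end
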